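(* In the roundabout exploration process described in the context (with $k\ge 1$), let $t=\lfloor N/(2k)\rfloor$. Then $|A(t)|\le 6k$.
   Context: Let $n\ge 2$ and $k\ge 1$ be natural numbers, $T$ a tree on an $n$-element vertex set $V$, and $N=2(n-1)$. Fix a root $r$ and a DFS tour of $T$ starting and ending at $r$ that traverses each edge of $T$ exactly twice, giving a cyclic vertex sequence $(v_1,\dots,v_N,v_{N+1})$ with $v_{N+1}=v_1=r$, and tour edges $e_i=\{v_i,v_{i+1}\}$ for $i\in[N]$. For $i,j\in[N]$ the circular interval $[\![i,j]\!]$ is $\{i,i+1,\dots,j\}$ if $i\le j$ and $\{i,\dots,N,1,\dots,j\}$ if $i>j$. Let $\langle G_1,\dots,G_N\rangle$ be graphs on $V$, each containing all but at most $k$ edges of $T$. Roundabout exploration process: agents $a_1,\dots,a_N$ with initial states $s_i(0)=i$. For steps $t=1,\dots,N$: (Movement) for every $i\in[N]$, if $s_i(t-1)=q$ then $s_i(t)=(q\bmod N)+1$ if $e_q\in E(G_t)$, and $s_i(t)=q$ otherwise. Let $D_i(t)=[\![i,s_i(t)]\!]$ and $D_i(0)=\{i\}$. (Elimination) $A(0)=\{a_1,\dots,a_N\}$; $A(t)$ is obtained from $A(t-1)$ by repeatedly removing an arbitrary agent $a_i$ of the current set with $D_i(t)\subseteq\bigcup D_j(t)$ over the other agents $a_j$ of the current set, until no such agent remains. *)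

theory Defs
  imports Main
begin

definition simple_graph :: "'a set \<Rightarrow> 'a set set \<Rightarrow> bool" where
  "simple_graph V E \<longleftrightarrow> (\<forall>e\<in>E. e \<subseteq> V \<and> card e = 2)"

definition adj_rel :: "'a set set \<Rightarrow> ('a \<times> 'a) set" where
  "adj_rel E = {(x, y). {x, y} \<in> E}"

definition graph_connected :: "'a set \<Rightarrow> 'a set set \<Rightarrow> bool" where
  "graph_connected V E \<longleftrightarrow> (\<forall>x\<in>V. \<forall>y\<in>V. (x, y) \<in> (adj_rel E)\<^sup>*)"

definition is_cycle :: "'a set set \<Rightarrow> 'a list \<Rightarrow> bool" where
  "is_cycle E cs \<longleftrightarrow> length cs \<ge> 3 \<and> distinct cs
     \<and> (\<forall>i. Suc i < length cs \<longrightarrow> {cs ! i, cs ! Suc i} \<in> E)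
     \<and> {last cs, hd cs} \<in> E"

definition is_tree :: "'a set \<Rightarrow> 'a set set \<Rightarrow> bool" where
  "is_tree V E \<longleftrightarrow> simple_graph V E \<and> V \<noteq> {} \<and> graph_connected V E \<and> (\<nexists>cs. is_cycle E cs)"

text \<open>A closed walk v_1 ... v_{N+1} in T with v_1 = v_{N+1} = r traversing every edge of T
  exactly twice (N = 2(n-1)); in a tree this is exactly a DFS tour from r.\<close>
definition dfs_tour :: "'a set set \<Rightarrow> 'a \<Rightarrow> nat \<Rightarrow> (nat \<Rightarrow> 'a) \<Rightarrow> bool" where
  "dfs_tour T r N v \<longleftrightarrow> v 1 = r \<and> v (N + 1) = r
     \<and> (\<forall>i\<in>{1..N}. {v i, v (Suc i)} \<in> T)
     \<and> (\<forall>e\<in>T. card {i\<in>{1..N}. {v i, v (Suc i)} = e} = 2)"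

definition cint :: "nat \<Rightarrow> nat \<Rightarrow> nat \<Rightarrow> nat set" where
  "cint N i j = (if i \<le> j then {i..j} else {i..N} \<union> {1..j})"

text \<open>State s_i(t) of agent a_i; tour edge e_q = {v_q, v_(q+1)}; G t is the edge set of G_t.\<close>
fun agent_pos :: "nat \<Rightarrow> (nat \<Rightarrow> 'a) \<Rightarrow> (nat \<Rightarrow> 'a set set) \<Rightarrow> nat \<Rightarrow> nat \<Rightarrow> nat" where
  "agent_pos N v G i 0 = i"
| "agent_pos N v G i (Suc t) =
     (let q = agent_pos N v G i t in
      if {v q, v (Suc q)} \<in> G (Suc t) then q mod N + 1 else q)"

definition agent_D :: "nat \<Rightarrow> (nat \<Rightarrow> 'a) \<Rightarrow> (nat \<Rightarrow> 'a set set) \<Rightarrow> nat \<Rightarrow> nat \<Rightarrow> nat set" where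
  "agent_D N v G i t = cint N i (agent_pos N v G i t)"

definition elim_step :: "nat \<Rightarrow> (nat \<Rightarrow> 'a) \<Rightarrow> (nat \<Rightarrow> 'a set set) \<Rightarrow> nat \<Rightarrow> (nat set \<times> nat set) set" where
  "elim_step N v G t = {(S, S - {i}) | S i. i \<in> S \<and>
       agent_D N v G i t \<subseteq> (\<Union>j\<in>S - {i}. agent_D N v G j t)}"

definition valid_elimination :: "nat \<Rightarrow> (nat \<Rightarrow> 'a) \<Rightarrow> (nat \<Rightarrow> 'a set set) \<Rightarrow> (nat \<Rightarrow> nat set) \<Rightarrow> bool" where
  "valid_elimination N v G A \<longleftrightarrow> A 0 = {1..N} \<and>
     (\<forall>t\<in>{1..N}. (A (t - 1), A t) \<in> (elim_step N v G t)\<^sup>* \<and>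
                 (\<nexists>S'. (A t, S') \<in> elim_step N v G t))"

end

theory Submission
  imports Defs "HOL-Number_Theory.Cong"
begin

(* Let t = N div (2k) and S = A(t). Since the elimination has stopped, no interval D_i(t) with
   i in S is covered by the others. Each D_i(t) is an arc of length m_i + 1 on the N-cycle,
   where m_i <= t is the number of moves of a_i. Among three arcs through a common point one is
   covered by the other two, so every point lies on at most two arcs and sum (m_i + 1) <= 2N.
   Arcs with a common end are nested, so no two agents of S ever share a position; hence at
   each step the agents of S that stay put sit at distinct tour positions whose edge is missing
   from G_sigma, and since each of the at most k missing tree edges occurs twice in the tour,
   sum (t - m_i) <= 2kt. Adding, |S| (t + 1) <= 2N + 2kt < 6k (t + 1). *)

lemma sum_card_filter_swap:
  assumes "finite S" "finite X"
  shows "(\<Sum>i\<in>S. card {x\<in>X. P i x}) = (\<Sum>x\<in>X. card {i\<in>S. P i x})"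
proof -
  have "(\<Sum>i\<in>S. card {x\<in>X. P i x}) = (\<Sum>i\<in>S. \<Sum>x\<in>X. if P i x then 1 else 0)"
    using assms by (simp add: sum.inter_filter[symmetric])
  also have "\<dots> = (\<Sum>x\<in>X. \<Sum>i\<in>S. if P i x then 1 else 0)"
    by (rule sum.swap)
  finally show ?thesis
    using assms by (simp add: sum.inter_filter[symmetric])
qed

section \<open>Irredundant families and arcs of a cycle\<close>

definition irredundant :: "'i set \<Rightarrow> ('i \<Rightarrow> 'b set) \<Rightarrow> bool" where
  "irredundant S D \<longleftrightarrow> (\<forall>i\<in>S. \<not> D i \<subseteq> (\<Union>j\<in>S - {i}. D j))"

lemma irredundantD:
  assumes "irredundant S D" "i \<in> S" "J \<subseteq> S - {i}"
  shows "\<not> D i \<subseteq> (\<Union>j\<in>J. D j)"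
proof
  assume "D i \<subseteq> (\<Union>j\<in>J. D j)"
  also have "\<dots> \<subseteq> (\<Union>j\<in>S - {i}. D j)"
    using assms(3) by (rule UN_mono) simp
  finally show False
    using assms(1,2) unfolding irredundant_def by simp
qed

lemma irredundant_cong:
  assumes "\<And>i. i \<in> S \<Longrightarrow> D i = D' i"
  shows "irredundant S D \<longleftrightarrow> irredundant S D'"
proof -
  have "(\<Union>j\<in>S - {i}. D j) = (\<Union>j\<in>S - {i}. D' j)" for i
    using assms by simp
  then show ?thesis
    using assms unfolding irredundant_def by simp
qed

definition cyclic_arc :: "nat \<Rightarrow> nat \<Rightarrow> nat \<Rightarrow> nat set" where
  "cyclic_arc N i m = {x\<in>{1..N}. \<exists>s\<le>m. [i + s = x] (mod N)}"

lemma mem_cyclic_arc_iff: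
  assumes "i \<in> {1..N}"
  shows "x \<in> cyclic_arc N i m \<longleftrightarrow> x \<in> {1..N} \<and> (if i \<le> x then x - i else x + N - i) \<le> m"
proof (cases "x \<in> {1..N}")
  case False
  then show ?thesis
    by (auto simp: cyclic_arc_def)
next
  case True
  define d where "d = (if i \<le> x then x - i else x + N - i)"
  have d: "d < N" "[i + d = x] (mod N)"
    using assms True by (auto simp: d_def cong_def)
  have "d \<le> s" if "[i + s = x] (mod N)" for s
  proof -
    have "[d = s] (mod N)"
      using d(2) that by (metis cong_add_lcancel_nat cong_sym cong_trans)
    then have "d = s mod N"
      using d(1) by (simp add: cong_def)
    then show ?thesis
      by simp
  qed
  then show ?thesis
    using True d unfolding cyclic_arc_def d_def[symmetric] by (auto intro: le_trans)
qed

lemma card_cyclic_arc: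
  assumes "i \<in> {1..N}" "m < N"
  shows "card (cyclic_arc N i m) = m + 1"
proof (cases "i + m \<le> N")
  case True
  then have "cyclic_arc N i m = {i..i + m}"
    using assms by (auto simp: mem_cyclic_arc_iff split: if_splits)
  then show ?thesis
    by simp
next
  case False
  then have "cyclic_arc N i m = {i..N} \<union> {1..i + m - N}"
    using assms by (auto simp: mem_cyclic_arc_iff split: if_splits)
  moreover have "{i..N} \<inter> {1..i + m - N} = {}"
    using assms by auto
  ultimately show ?thesis
    using assms False by (simp add: card_Un_disjoint)
qed

lemma cint_eq_cyclic_arc:
  assumes "i \<in> {1..N}" "p \<in> {1..N}" "[i + m = p] (mod N)" "m < N"
  shows "cint N i p = cyclic_arc N i m"
proof -
  define d where "d = (if i \<le> p then p - i else p + N - i)"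
  have "[i + m = i + d] (mod N)"
    using assms(1,2) cong_trans[OF assms(3)] by (auto simp: d_def cong_def)
  then have "m = d"
    using assms by (intro cong_less_imp_eq_nat) (auto simp: d_def cong_add_lcancel_nat)
  then show ?thesis
    using assms(1,2) by (auto simp: mem_cyclic_arc_iff cint_def d_def split: if_splits)
qed

lemma cong_shift_start:
  fixes i j si sj s x N :: nat
  assumes "[i + si = x] (mod N)" "[j + sj = x] (mod N)" "si \<le> sj + s"
  shows "[j + (sj + s - si) = i + s] (mod N)"
proof -
  have "j + (sj + s - si) + si = j + sj + s"
    using assms(3) by arith
  also have "[j + sj + s = i + si + s] (mod N)"
    using assms(1,2) by (metis cong_add_rcancel_nat cong_sym cong_trans)
  also have "i + si + s = i + s + si"
    by simp
  finally show ?thesis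
    by (simp only: cong_add_rcancel_nat)
qed

(* Seen from the common point x, the arc starting at i covers the offsets -si .. mi - si;
   arc j covers the part of it before x, arc l the part after x. *)
lemma cyclic_arc_subset_Un:
  assumes "[i + si = x] (mod N)" "[j + sj = x] (mod N)" "[l + sl = x] (mod N)"
    and "si \<le> sj" "sj \<le> mj" "sl \<le> ml" "mi - si \<le> ml - sl"
  shows "cyclic_arc N i mi \<subseteq> cyclic_arc N j mj \<union> cyclic_arc N l ml"
proof
  fix y
  assume "y \<in> cyclic_arc N i mi"
  then obtain s where y: "y \<in> {1..N}" "s \<le> mi" "[i + s = y] (mod N)"
    unfolding cyclic_arc_def by auto
  show "y \<in> cyclic_arc N j mj \<union> cyclic_arc N l ml"
  proof (cases "s \<le> si")
    case True
    have "[j + (sj + s - si) = y] (mod N)"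
      using cong_trans[OF cong_shift_start[OF assms(1,2)] y(3)] assms(4) by simp
    moreover have "sj + s - si \<le> mj"
      using True assms(5) by simp
    ultimately have "y \<in> cyclic_arc N j mj"
      using y(1) unfolding cyclic_arc_def by blast
    then show ?thesis
      by simp
  next
    case False
    have "[l + (sl + s - si) = y] (mod N)"
      using cong_trans[OF cong_shift_start[OF assms(1,3)] y(3)] False by simp
    moreover have "sl + s - si \<le> ml"
      using False y(2) assms(6,7) by linarith
    ultimately have "y \<in> cyclic_arc N l ml"
      using y(1) unfolding cyclic_arc_def by blast
    then show ?thesis
      by simp
  qed
qed

lemma cyclic_arc_subset_same_end:
  assumes "[i + mi = j + mj] (mod N)" "mi \<le> mj"
  shows "cyclic_arc N i mi \<subseteq> cyclic_arc N j mj"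
  using cyclic_arc_subset_Un[OF assms(1) cong_refl cong_refl, of mj mj] assms(2) by simp

lemma cyclic_arc_covered_among_three:
  assumes "x \<in> cyclic_arc N a ma" "x \<in> cyclic_arc N b mb" "x \<in> cyclic_arc N c mc"
  shows "cyclic_arc N a ma \<subseteq> cyclic_arc N b mb \<union> cyclic_arc N c mc \<or>
    cyclic_arc N b mb \<subseteq> cyclic_arc N a ma \<union> cyclic_arc N c mc \<or>
    cyclic_arc N c mc \<subseteq> cyclic_arc N a ma \<union> cyclic_arc N b mb"
proof -
  \<comment> \<open>The arc reaching furthest back from x covers the part before x of the other two arcs;
    of these two, the one reaching less far beyond x is then covered.\<close>
  have covered: "cyclic_arc N p mp \<subseteq> cyclic_arc N q mq \<union> cyclic_arc N r mr \<or>
      cyclic_arc N r mr \<subseteq> cyclic_arc N q mq \<union> cyclic_arc N p mp"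
    if "[p + sp = x] (mod N)" "[q + sq = x] (mod N)" "[r + sr = x] (mod N)"
      "sp \<le> sq" "sr \<le> sq" "sp \<le> mp" "sq \<le> mq" "sr \<le> mr"
    for p q r sp sq sr mp mq mr
  proof (cases "mp - sp \<le> mr - sr")
    case True
    then show ?thesis
      using cyclic_arc_subset_Un[OF that(1,2,3)] that by simp
  next
    case False
    then show ?thesis
      using cyclic_arc_subset_Un[OF that(3,2,1)] that by simp
  qed
  obtain sa sb sc where
    a: "[a + sa = x] (mod N)" "sa \<le> ma" and
    b: "[b + sb = x] (mod N)" "sb \<le> mb" and
    c: "[c + sc = x] (mod N)" "sc \<le> mc"
    using assms unfolding cyclic_arc_def by auto
  consider "sb \<le> sa" "sc \<le> sa" | "sa \<le> sb" "sc \<le> sb" | "sa \<le> sc" "sb \<le> sc"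
    by linarith
  then show ?thesis
  proof cases
    case 1
    then show ?thesis
      using covered[OF b(1) a(1) c(1) 1 b(2) a(2) c(2)] by simp
  next
    case 2
    then show ?thesis
      using covered[OF a(1) b(1) c(1) 2 a(2) b(2) c(2)] by (metis Un_commute)
  next
    case 3
    then show ?thesis
      using covered[OF a(1) c(1) b(1) 3 a(2) c(2) b(2)] by (metis Un_commute)
  qed
qed

lemma card_cyclic_arcs_through_point_le_2:
  assumes "irredundant S (\<lambda>i. cyclic_arc N i (m i))"
  shows "card {i\<in>S. x \<in> cyclic_arc N i (m i)} \<le> 2"
proof (rule ccontr)
  define X where "X = {i\<in>S. x \<in> cyclic_arc N i (m i)}"
  assume "\<not> ?thesis"
  then have "2 < card X"
    by (simp add: X_def)
  then obtain a b c where "a \<in> X" "b \<in> X" "c \<in> X" and abc: "a \<noteq> b" "a \<noteq> c" "b \<noteq> c"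
    by (auto simp: numeral_eq_Suc card_le_Suc_iff Suc_le_eq[symmetric])
  then have "a \<in> S" "b \<in> S" "c \<in> S"
    and x: "x \<in> cyclic_arc N a (m a)" "x \<in> cyclic_arc N b (m b)" "x \<in> cyclic_arc N c (m c)"
    by (auto simp: X_def)
  show False
    using cyclic_arc_covered_among_three[OF x] abc \<open>a \<in> S\<close> \<open>b \<in> S\<close> \<open>c \<in> S\<close>
      irredundantD[OF assms, of a "{b, c}"] irredundantD[OF assms, of b "{a, c}"]
      irredundantD[OF assms, of c "{a, b}"]
    by auto
qed

lemma sum_cyclic_arc_lengths_le:
  assumes "S \<subseteq> {1..N}" "\<forall>i\<in>S. m i < N" "irredundant S (\<lambda>i. cyclic_arc N i (m i))"
  shows "(\<Sum>i\<in>S. m i + 1) \<le> 2 * N"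
proof -
  have "finite S"
    using assms(1) finite_subset by blast
  have "{x\<in>{1..N}. x \<in> cyclic_arc N i mi} = cyclic_arc N i mi" for i mi
    by (auto simp: cyclic_arc_def)
  then have "(\<Sum>i\<in>S. m i + 1) = (\<Sum>i\<in>S. card {x\<in>{1..N}. x \<in> cyclic_arc N i (m i)})"
    using assms(1,2) by (simp add: card_cyclic_arc subset_iff)
  also have "\<dots> = (\<Sum>x\<in>{1..N}. card {i\<in>S. x \<in> cyclic_arc N i (m i)})"
    using \<open>finite S\<close> by (intro sum_card_filter_swap) auto
  also have "\<dots> \<le> (\<Sum>x\<in>{1..N}. 2)"
    using assms(3) by (intro sum_mono card_cyclic_arcs_through_point_le_2)
  finally show ?thesis
    by simp
qed

section \<open>The roundabout exploration process\<close>

definition agent_moves :: "nat \<Rightarrow> (nat \<Rightarrow> 'a) \<Rightarrow> (nat \<Rightarrow> 'a set set) \<Rightarrow> nat \<Rightarrow> nat \<Rightarrow> bool" where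
  "agent_moves N v G i \<sigma> \<longleftrightarrow>
     {v (agent_pos N v G i (\<sigma> - 1)), v (Suc (agent_pos N v G i (\<sigma> - 1)))} \<in> G \<sigma>"

definition move_count :: "nat \<Rightarrow> (nat \<Rightarrow> 'a) \<Rightarrow> (nat \<Rightarrow> 'a set set) \<Rightarrow> nat \<Rightarrow> nat \<Rightarrow> nat" where
  "move_count N v G i \<tau> = card {\<sigma>\<in>{1..\<tau>}. agent_moves N v G i \<sigma>}"

lemma agent_pos_Suc:
  "agent_pos N v G i (Suc \<tau>) =
     (if agent_moves N v G i (Suc \<tau>) then agent_pos N v G i \<tau> mod N + 1 else agent_pos N v G i \<tau>)"
  by (simp add: agent_moves_def Let_def)

lemma move_count_Suc:
  "move_count N v G i (Suc \<tau>) = move_count N v G i \<tau> + (if agent_moves N v G i (Suc \<tau>) then 1 else 0)"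
proof -
  have "{\<sigma>\<in>{1..Suc \<tau>}. agent_moves N v G i \<sigma>} =
      {\<sigma>\<in>{1..\<tau>}. agent_moves N v G i \<sigma>} \<union> (if agent_moves N v G i (Suc \<tau>) then {Suc \<tau>} else {})"
    by (auto simp: le_Suc_eq)
  then show ?thesis
    unfolding move_count_def by (auto simp: card_insert_if)
qed

lemma card_stuck_steps:
  "card {\<sigma>\<in>{1..\<tau>}. \<not> agent_moves N v G i \<sigma>} = \<tau> - move_count N v G i \<tau>"
proof -
  have "{\<sigma>\<in>{1..\<tau>}. \<not> agent_moves N v G i \<sigma>} = {1..\<tau>} - {\<sigma>\<in>{1..\<tau>}. agent_moves N v G i \<sigma>}"
    by auto
  moreover have "card ({1..\<tau>} - {\<sigma>\<in>{1..\<tau>}. agent_moves N v G i \<sigma>}) =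
      \<tau> - card {\<sigma>\<in>{1..\<tau>}. agent_moves N v G i \<sigma>}"
    by (subst card_Diff_subset) auto
  ultimately show ?thesis
    unfolding move_count_def by simp
qed

lemma move_count_le: "move_count N v G i \<tau> \<le> \<tau>"
proof -
  have "move_count N v G i \<tau> \<le> card {1..\<tau>}"
    unfolding move_count_def by (intro card_mono) auto
  then show ?thesis
    by simp
qed

lemma agent_pos_cong:
  assumes "i \<in> {1..N}"
  shows "agent_pos N v G i \<tau> \<in> {1..N} \<and> [i + move_count N v G i \<tau> = agent_pos N v G i \<tau>] (mod N)"
proof (induction \<tau>)
  case 0
  then show ?case
    using assms by (simp add: move_count_def)
next
  case (Suc \<tau>)
  let ?q = "agent_pos N v G i \<tau>"
  have "?q mod N + 1 \<in> {1..N}"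
    using assms by (simp add: Suc_leI)
  moreover have "[i + move_count N v G i \<tau> + 1 = ?q + 1] (mod N)"
    using Suc.IH cong_add_rcancel_nat by blast
  then have "[i + move_count N v G i \<tau> + 1 = ?q mod N + 1] (mod N)"
    by (simp add: cong_def mod_Suc_eq)
  ultimately show ?case
    using Suc.IH unfolding agent_pos_Suc move_count_Suc by (simp del: agent_pos.simps)
qed

lemma agent_D_eq_cyclic_arc:
  assumes "i \<in> {1..N}" "\<tau> < N"
  shows "agent_D N v G i \<tau> = cyclic_arc N i (move_count N v G i \<tau>)"
proof -
  have "move_count N v G i \<tau> < N"
    using move_count_le[of N v G i \<tau>] assms(2) by simp
  moreover note agent_pos_cong[OF assms(1), of v G \<tau>]
  ultimately show ?thesis
    unfolding agent_D_def using cint_eq_cyclic_arc[OF assms(1)] by blast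
qed

lemma agent_pos_eq_mono:
  assumes "agent_pos N v G i \<tau> = agent_pos N v G j \<tau>" "\<tau> \<le> \<tau>'"
  shows "agent_pos N v G i \<tau>' = agent_pos N v G j \<tau>'"
  using assms(2)
proof (induction \<tau>' rule: dec_induct)
  case base
  then show ?case
    using assms(1) .
next
  case (step \<tau>')
  then show ?case
    by (simp add: Let_def)
qed

lemma irredundant_agents_pos_inj:
  assumes "S \<subseteq> {1..N}" "t < N" "irredundant S (\<lambda>i. agent_D N v G i t)" "\<tau> \<le> t"
  shows "inj_on (\<lambda>i. agent_pos N v G i \<tau>) S"
proof (rule inj_onI, rule ccontr)
  fix i j
  assume ij: "i \<in> S" "j \<in> S" "agent_pos N v G i \<tau> = agent_pos N v G j \<tau>" "i \<noteq> j"
  define m where "m p = move_count N v G p t" for p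
  have D: "agent_D N v G p t = cyclic_arc N p (m p)" if "p \<in> S" for p
    using agent_D_eq_cyclic_arc assms(1,2) that unfolding m_def by blast
  have pos_cong: "[p + m p = agent_pos N v G p t] (mod N)" if "p \<in> S" for p
    using agent_pos_cong[of p N v G t] assms(1) that unfolding m_def by blast
  have "agent_pos N v G i t = agent_pos N v G j t"
    using agent_pos_eq_mono[OF ij(3) assms(4)] .
  then have "[i + m i = agent_pos N v G j t] (mod N)"
    using pos_cong[OF ij(1)] by simp
  then have end_cong: "[i + m i = j + m j] (mod N)"
    using cong_trans cong_sym[OF pos_cong[OF ij(2)]] by blast
  \<comment> \<open>Arcs with a common end are nested, so the shorter one would have been eliminated.\<close>
  show False
  proof (cases "m i \<le> m j")
    case True
    then have "agent_D N v G i t \<subseteq> agent_D N v G j t"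
      using cyclic_arc_subset_same_end[OF end_cong] D ij(1,2) by simp
    then show False
      using irredundantD[OF assms(3) ij(1), of "{j}"] ij(2,4) by simp
  next
    case False
    then have "agent_D N v G j t \<subseteq> agent_D N v G i t"
      using cyclic_arc_subset_same_end[OF cong_sym[OF end_cong]] D ij(1,2) by simp
    then show False
      using irredundantD[OF assms(3) ij(2), of "{i}"] ij(1,4) by simp
  qed
qed

lemma card_stuck_agents_le:
  assumes "dfs_tour T r N v" "finite T" "S \<subseteq> {1..N}"
    and "inj_on (\<lambda>i. agent_pos N v G i (\<sigma> - 1)) S"
  shows "card {i\<in>S. \<not> agent_moves N v G i \<sigma>} \<le> 2 * card (T - G \<sigma>)"
proof -
  let ?stuck = "{i\<in>S. \<not> agent_moves N v G i \<sigma>}"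
  let ?pos = "\<lambda>i. agent_pos N v G i (\<sigma> - 1)"
  let ?visits = "\<lambda>e. {q\<in>{1..N}. {v q, v (Suc q)} = e}"
  have "?pos ` ?stuck \<subseteq> (\<Union>e\<in>T - G \<sigma>. ?visits e)"
  proof
    fix q
    assume "q \<in> ?pos ` ?stuck"
    then obtain i where i: "i \<in> S" "\<not> agent_moves N v G i \<sigma>" "q = ?pos i"
      by blast
    then have "q \<in> {1..N}"
      using agent_pos_cong assms(3) by blast
    moreover have "{v q, v (Suc q)} \<in> T"
      using assms(1) \<open>q \<in> {1..N}\<close> unfolding dfs_tour_def by blast
    moreover have "{v q, v (Suc q)} \<notin> G \<sigma>"
      using i unfolding agent_moves_def by simp
    ultimately show "q \<in> (\<Union>e\<in>T - G \<sigma>. ?visits e)"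
      by blast
  qed
  moreover have "inj_on ?pos ?stuck"
    using assms(4) by (rule inj_on_subset) simp
  moreover have "finite (\<Union>e\<in>T - G \<sigma>. ?visits e)"
    using assms(2) by simp
  ultimately have "card ?stuck \<le> card (\<Union>e\<in>T - G \<sigma>. ?visits e)"
    using card_inj_on_le by blast
  also have "\<dots> \<le> (\<Sum>e\<in>T - G \<sigma>. card (?visits e))"
    using assms(2) by (intro card_UN_le) simp
  also have "\<dots> = 2 * card (T - G \<sigma>)"
    using assms(1) by (simp add: dfs_tour_def)
  finally show ?thesis .
qed

lemma card_irredundant_agents_le:
  assumes "dfs_tour T r N v" "finite T" "S \<subseteq> {1..N}" "t < N"
    and "\<forall>\<sigma>\<in>{1..t}. card (T - G \<sigma>) \<le> k"
    and "irredundant S (\<lambda>i. agent_D N v G i t)"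
  shows "card S * (t + 1) \<le> 2 * N + 2 * k * t"
proof -
  define m where "m i = move_count N v G i t" for i
  have "finite S"
    using assms(3) finite_subset by blast
  have m_less: "m i < N" for i
    using move_count_le[of N v G i t] assms(4) unfolding m_def by simp
  have D_eq: "agent_D N v G i t = cyclic_arc N i (m i)" if "i \<in> S" for i
    using agent_D_eq_cyclic_arc[of i N t v G] that assms(3,4) unfolding m_def by blast
  have "irredundant S (\<lambda>i. agent_D N v G i t) \<longleftrightarrow> irredundant S (\<lambda>i. cyclic_arc N i (m i))"
    by (rule irredundant_cong) (rule D_eq)
  then have "irredundant S (\<lambda>i. cyclic_arc N i (m i))"
    using assms(6) by simp
  then have lengths: "(\<Sum>i\<in>S. m i + 1) \<le> 2 * N"
    using m_less by (intro sum_cyclic_arc_lengths_le[OF assms(3)]) simp_all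
  have stuck_per_step: "card {i\<in>S. \<not> agent_moves N v G i \<sigma>} \<le> 2 * k" if "\<sigma> \<in> {1..t}" for \<sigma>
  proof -
    have "\<sigma> - 1 \<le> t"
      using that by auto
    then have "inj_on (\<lambda>i. agent_pos N v G i (\<sigma> - 1)) S"
      by (rule irredundant_agents_pos_inj[OF assms(3,4,6)])
    then have "card {i\<in>S. \<not> agent_moves N v G i \<sigma>} \<le> 2 * card (T - G \<sigma>)"
      by (rule card_stuck_agents_le[OF assms(1-3)])
    also have "\<dots> \<le> 2 * k"
      using assms(5) that by simp
    finally show ?thesis .
  qed
  have "(\<Sum>i\<in>S. t - m i) = (\<Sum>i\<in>S. card {\<sigma>\<in>{1..t}. \<not> agent_moves N v G i \<sigma>})"
    by (simp only: m_def card_stuck_steps)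
  also have "\<dots> = (\<Sum>\<sigma>\<in>{1..t}. card {i\<in>S. \<not> agent_moves N v G i \<sigma>})"
    using \<open>finite S\<close> by (rule sum_card_filter_swap) simp
  also have "\<dots> \<le> (\<Sum>\<sigma>\<in>{1..t}. 2 * k)"
    using stuck_per_step by (rule sum_mono)
  finally have stuck: "(\<Sum>i\<in>S. t - m i) \<le> 2 * k * t"
    by (simp add: mult.commute)
  have "card S * (t + 1) = (\<Sum>i\<in>S. m i + 1) + (\<Sum>i\<in>S. t - m i)"
    using move_count_le[of N v G _ t] by (simp add: sum.distrib[symmetric] m_def)
  then show ?thesis
    using lengths stuck by linarith
qed

lemma finite_tree_edges:
  assumes "finite V" "is_tree V T"
  shows "finite T"
proof -
  have "T \<subseteq> Pow V"
    using assms(2) unfolding is_tree_def simple_graph_def by blast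
  then show ?thesis
    using assms(1) by (meson finite_Pow_iff finite_subset)
qed

lemma elim_steps_subset: "(X, Y) \<in> (elim_step N v G t)\<^sup>* \<Longrightarrow> Y \<subseteq> X"
  by (induction rule: rtrancl_induct) (auto simp: elim_step_def)

lemma valid_elimination_subset:
  assumes "valid_elimination N v G A" "t \<le> N"
  shows "A t \<subseteq> {1..N}"
  using assms(2)
proof (induction t)
  case 0
  then show ?case
    using assms(1) by (simp add: valid_elimination_def)
next
  case (Suc t)
  then have "(A t, A (Suc t)) \<in> (elim_step N v G (Suc t))\<^sup>*"
    using assms(1) unfolding valid_elimination_def by force
  then show ?case
    using elim_steps_subset Suc by fastforce
qed

lemma valid_elimination_irredundant:
  assumes "valid_elimination N v G A" "t \<in> {1..N}"
  shows "irredundant (A t) (\<lambda>i. agent_D N v G i t)"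
  unfolding irredundant_def
proof (intro ballI notI)
  fix i
  assume "i \<in> A t" "agent_D N v G i t \<subseteq> (\<Union>j\<in>A t - {i}. agent_D N v G j t)"
  then have "(A t, A t - {i}) \<in> elim_step N v G t"
    unfolding elim_step_def by blast
  then show False
    using assms unfolding valid_elimination_def by blast
qed

theorem corollary9:
  fixes V :: "'a set" and T :: "'a set set" and n k N :: nat and r :: 'a
    and v :: "nat \<Rightarrow> 'a" and G :: "nat \<Rightarrow> 'a set set" and A :: "nat \<Rightarrow> nat set"
  assumes "finite V" and "card V = n" and "n \<ge> 2" and "k \<ge> 1"
    and "is_tree V T"
    and "r \<in> V"
    and "N = 2 * (n - 1)"
    and "dfs_tour T r N v"
    and "\<forall>t\<in>{1..N}. simple_graph V (G t) \<and> card (T - G t) \<le> k"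
    and "valid_elimination N v G A"
  shows "card (A (N div (2 * k))) \<le> 6 * k"
proof -
  define t where "t = N div (2 * k)"
  have N_eq: "N = 2 * k * t + N mod (2 * k)" and "N mod (2 * k) < 2 * k"
    using assms(4) unfolding t_def by simp_all
  then have N_less: "N < 2 * k * (t + 1)"
    by (simp add: algebra_simps)
  have "2 * t \<le> 2 * k * t"
    using assms(4) by simp
  then have "t < N"
    using N_eq assms(3,7) by linarith
  have "finite T"
    using finite_tree_edges assms(1,5) by blast
  show ?thesis
  proof (cases "t = 0")
    case True
    then show ?thesis
      using assms(10) N_less unfolding t_def by (simp add: valid_elimination_def)
  next
    case False
    then have "t \<in> {1..N}"
      using \<open>t < N\<close> by simp
    then have "card (A t) * (t + 1) \<le> 2 * N + 2 * k * t"
      using card_irredundant_agents_le[OF assms(8) \<open>finite T\<close> valid_elimination_subset[OF assms(10)]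
          \<open>t < N\<close> _ valid_elimination_irredundant[OF assms(10)]] assms(9) by simp
    also have "\<dots> < 6 * k * (t + 1)"
      using N_less by simp
    finally have "card (A t) < 6 * k"
      by (simp only: mult_less_cancel2)
    then show ?thesis
      unfolding t_def by simp
  qed
qed

end
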